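(* (Expression Well-Typedness.) Let $\Gamma$ be a Bundl context, $e$ an expression, $\tau$ a type, $\pi,\pi'$ perspectives, $p\in\mathbb{N}$ and $\eta,\sigma,\Sigma$ local, shared and global memories, and assume all array accesses are in bounds (whenever during evaluation an array expression evaluates to $\langle l,n\rangle$ and its index to $i$, then $0\le i<n$). If $\Gamma\vdash^{\pi} e:\tau$, $\Gamma\vdash\eta,\sigma,\Sigma$, $\pi\vdash p$, and $\eta,\sigma,\Sigma\vdash^{\pi}_{\pi'} e\Downarrow v$, then $\eta,\sigma,\Sigma\vdash v:\tau$.
   Context: Bundl is parameterized by fixed positive integers $T$ (threads per block) and $B$ (blocks per grid). Levels $h\in\{\mathrm{Thread},\mathrm{Block},\mathrm{Grid}\}$ with $\mathrm{Thread}\le\mathrm{Block}\le\mathrm{Grid}$; memory kinds $l\in\{\mathrm{Local},\mathrm{Shared},\mathrm{Global}\}$. A perspective is $\pi=(h,n)$, $n\in\mathbb{N}$; $(h_1,n_1)\le(h_2,n_2)$ iff $n_1\mid n_2$ and $h_1\le h_2$; $<$ is the strict version. Level ratios $\mathrm{Grid}/\mathrm{Block}=B$, $\mathrm{Block}/\mathrm{Thread}=T$ (with $h/h=1$, $\mathrm{Grid}/\mathrm{Thread}=BT$); $(h_1,n_1)/(h_2,n_2)=((h_1/h_2)\cdot n_1)/n_2$. For $\pi=(h,n)$, $\pi\vdash p$ means $p<n$. Types: base types $\beta ::= \mathrm{bool}\mid\mathrm{int}\mid\mathrm{float}$; $\tau ::= \beta\mid\beta[]^{l}\mid\mathrm{Fun}(\Gamma',\pi,m)\mid\mathrm{async}\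 \tau$. Contexts $\Gamma$ are finite lists of bindings $x:^{\pi}\tau$. Expressions: $e ::= x\mid n\mid f\mid b\mid\mathrm{partition\_id}\mid e_1[e_2]\mid e_1\ \mathrm{bop}\ e_2\mid e_1\ \mathrm{cmp}\ e_2$ ($\mathrm{bop}$ fixed total functions $\mathbb{Z}^2\to\mathbb{Z}$, $\mathrm{cmp}$ fixed total functions $\mathbb{Z}^2\to\{\mathrm{true},\mathrm{false}\}$). Expression typing $\Gamma\vdash^{\pi}e:\tau$ is the least relation with: if $x:^{\pi}\tau\in\Gamma$ then $\Gamma\vdash^{\pi}x:\tau$; literals typed int/float/bool at any $\pi$; if $\pi<(\mathrm{Grid},1)$ then $\Gamma\vdash^{\pi}\mathrm{partition\_id}:\mathrm{int}$; if $\Gamma\vdash^{\pi''}e_1:\tau[]^{l}$, $\Gamma\vdash^{\pi}e_2:\mathrm{int}$, $l\in\{\mathrm{Global},\mathrm{Local}\}$, $\pi\le\pi''$ then $\Gamma\vdash^{\pi}e_1[e_2]:\tau$; if $\Gamma\vdash^{\pi''}e_1:\tau[]^{\mathrm{Shared}}$, $\Gamma\vdash^{\pi}e_2:\mathrm{int}$, $\pi\le(\mathrm{Block},1)$, $\pi\le\pi''$ then $\Gamma\vdash^{\pi}e_1[e_2]:\tau$; if $e_1,e_2$ have type int at $\pi$ then $e_1\ \mathrm{bop}\ e_2:\mathrm{int}$ and $e_1\ \mathrm{cmp}\ e_2:\mathrm{bool}$ at $\pi$. Values are integers, floats, booleans, array references $\langle x,n\rangle$ and function closures. Memories $\eta$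 (local), $\sigma$ (shared), $\Sigma$ (global) are finite maps from names (identified with integer locations) to values annotated with perspectives ($x\mapsto^{\pi}v$), with disjoint domains; $\mathrm{get}(\eta,\sigma,\Sigma,x)$ returns the value at $x$ from whichever memory contains it. Value typing $\eta,\sigma,\Sigma\vdash v:\tau$: integers:int, booleans:bool, floats:float; $\langle x,n\rangle:\beta[]^{l}$ iff $\mathrm{get}(\eta,\sigma,\Sigma,x+i):\beta$ for all $i<n$; closures have function types according to a fixed given relation. Environment typing $\Gamma\vdash\eta,\sigma,\Sigma$ holds iff for every binding $x:^{\pi}\tau\in\Gamma$: for $\tau$ a base type or $\beta[]^{\mathrm{Local}}$, $\eta$ maps $x\mapsto^{\pi}v$ with $v:\tau$; for $\beta[]^{\mathrm{Shared}}$, $\sigma$ maps $x\mapsto^{\pi}v$ with $v:\tau$; for $\beta[]^{\mathrm{Global}}$ or a function type, $\Sigma$ maps $x\mapsto^{\pi}v$ with $v:\tau$; and no binding has an $\mathrm{async}$ type. Evaluation $\eta,\sigma,\Sigma\vdash^{\pi}_{\pi'}e\Downarrow v$ is the least relation with: if $\pi<(\mathrm{Grid},1)$ and $\pi'\le\pi$ then $\mathrm{partition\_id}\Downarrow\pi/\pi'-1$; $x\Downarrow\mathrm{get}(\eta,\sigma,\Sigma,x)$; if $e_1\Downarrow\langle l,n\rangle$, $e_2\Downarrow i$, $i<n$, $\pi'\le\pi$ then $e_1[e_2]\Downarrow\mathrm{get}(\eta,\sigma,\Sigma,l+i)$; literals evaluate to themselves; $e_1\ \mathrm{bop}\ e_2$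 and $e_1\ \mathrm{cmp}\ e_2$ evaluate by evaluating both operands (at the same $\pi,\pi'$) and applying the operation. *)

theory Defs
  imports Main "HOL.Real"
begin

datatype level = Thread | Block | Grid
datatype memkind = Local | Shared | Global

fun level_le :: "level \<Rightarrow> level \<Rightarrow> bool" where
  "level_le Thread _ = True"
| "level_le Block h = (h = Block \<or> h = Grid)"
| "level_le Grid h = (h = Grid)"

type_synonym persp = "level \<times> nat"

definition pleq :: "persp \<Rightarrow> persp \<Rightarrow> bool" where
  "pleq p1 p2 = (snd p1 dvd snd p2 \<and> level_le (fst p1) (fst p2))"

definition pless :: "persp \<Rightarrow> persp \<Rightarrow> bool" where
  "pless p1 p2 = (pleq p1 p2 \<and> p1 \<noteq> p2)"

text \<open>Level ratio h1/h2 (only meaningful for h2 \<le> h1; other cases are never used).\<close>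
fun lratio :: "nat \<Rightarrow> nat \<Rightarrow> level \<Rightarrow> level \<Rightarrow> nat" where
  "lratio T B Grid Block = B"
| "lratio T B Block Thread = T"
| "lratio T B Grid Thread = B * T"
| "lratio T B h1 h2 = (if h1 = h2 then 1 else 0)"

definition pdiv :: "nat \<Rightarrow> nat \<Rightarrow> persp \<Rightarrow> persp \<Rightarrow> nat" where
  "pdiv T B p1 p2 = (lratio T B (fst p1) (fst p2) * snd p1) div snd p2"

definition pvdash :: "persp \<Rightarrow> nat \<Rightarrow> bool" where
  "pvdash pi p = (p < snd pi)"

datatype base = TBool | TInt | TFloat

type_synonym name = int

datatype ty = TBase base | TArr base memkind
  | TFun "(name \<times> persp \<times> ty) list" persp nat
  | TAsync ty

type_synonym ctx = "(name \<times> persp \<times> ty) list"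

datatype exp = EVar name | EInt int | EFloat real | EBool bool | EPid
  | EIdx exp exp
  | EBop "int \<Rightarrow> int \<Rightarrow> int" exp exp
  | ECmp "int \<Rightarrow> int \<Rightarrow> bool" exp exp

text \<open>Closures are abstract (type parameter 'c); their typing is a given relation.\<close>
datatype 'c val = VInt int | VFloat real | VBool bool | VArr name nat | VClos 'c

type_synonym 'c mem = "name \<Rightarrow> (persp \<times> 'c val) option"

definition get :: "'c mem \<Rightarrow> 'c mem \<Rightarrow> 'c mem \<Rightarrow> name \<Rightarrow> 'c val option" where
  "get \<eta> \<sigma> \<Sigma> x =
     (case \<eta> x of Some (_, v) \<Rightarrow> Some v
      | None \<Rightarrow> (case \<sigma> x of Some (_, v) \<Rightarrow> Some v
               | None \<Rightarrow> (case \<Sigma> x of Some (_, v) \<Rightarrow> Some v | None \<Rightarrow> None)))"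

definition memories_ok :: "'c mem \<Rightarrow> 'c mem \<Rightarrow> 'c mem \<Rightarrow> bool" where
  "memories_ok \<eta> \<sigma> \<Sigma> =
     (finite (dom \<eta>) \<and> finite (dom \<sigma>) \<and> finite (dom \<Sigma>) \<and>
      dom \<eta> \<inter> dom \<sigma> = {} \<and> dom \<eta> \<inter> dom \<Sigma> = {} \<and> dom \<sigma> \<inter> dom \<Sigma> = {})"

fun base_ty :: "'c val \<Rightarrow> base \<Rightarrow> bool" where
  "base_ty (VInt _) TInt = True"
| "base_ty (VBool _) TBool = True"
| "base_ty (VFloat _) TFloat = True"
| "base_ty _ _ = False"

fun vty :: "('c \<Rightarrow> ty \<Rightarrow> bool) \<Rightarrow> 'c mem \<Rightarrow> 'c mem \<Rightarrow> 'c mem \<Rightarrow> 'c val \<Rightarrow> ty \<Rightarrow> bool" where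
  "vty ctyp \<eta> \<sigma> \<Sigma> v (TBase \<beta>) = base_ty v \<beta>"
| "vty ctyp \<eta> \<sigma> \<Sigma> (VArr x n) (TArr \<beta> l) =
     (\<forall>i<n. \<exists>w. get \<eta> \<sigma> \<Sigma> (x + int i) = Some w \<and> base_ty w \<beta>)"
| "vty ctyp \<eta> \<sigma> \<Sigma> (VClos c) (TFun G p m) = ctyp c (TFun G p m)"
| "vty ctyp \<eta> \<sigma> \<Sigma> _ _ = False"

definition env_ty :: "('c \<Rightarrow> ty \<Rightarrow> bool) \<Rightarrow> ctx \<Rightarrow> 'c mem \<Rightarrow> 'c mem \<Rightarrow> 'c mem \<Rightarrow> bool" where
  "env_ty ctyp \<Gamma> \<eta> \<sigma> \<Sigma> =
     (\<forall>(x, \<pi>, \<tau>) \<in> set \<Gamma>.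
        (case \<tau> of
           TBase _ \<Rightarrow> \<exists>v. \<eta> x = Some (\<pi>, v) \<and> vty ctyp \<eta> \<sigma> \<Sigma> v \<tau>
         | TArr _ Local \<Rightarrow> \<exists>v. \<eta> x = Some (\<pi>, v) \<and> vty ctyp \<eta> \<sigma> \<Sigma> v \<tau>
         | TArr _ Shared \<Rightarrow> \<exists>v. \<sigma> x = Some (\<pi>, v) \<and> vty ctyp \<eta> \<sigma> \<Sigma> v \<tau>
         | TArr _ Global \<Rightarrow> \<exists>v. \<Sigma> x = Some (\<pi>, v) \<and> vty ctyp \<eta> \<sigma> \<Sigma> v \<tau>
         | TFun _ _ _ \<Rightarrow> \<exists>v. \<Sigma> x = Some (\<pi>, v) \<and> vty ctyp \<eta> \<sigma> \<Sigma> v \<tau>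
         | TAsync _ \<Rightarrow> False))"

inductive has_ty :: "ctx \<Rightarrow> persp \<Rightarrow> exp \<Rightarrow> ty \<Rightarrow> bool" where
  ty_var: "(x, \<pi>, \<tau>) \<in> set \<Gamma> \<Longrightarrow> has_ty \<Gamma> \<pi> (EVar x) \<tau>"
| ty_int: "has_ty \<Gamma> \<pi> (EInt n) (TBase TInt)"
| ty_float: "has_ty \<Gamma> \<pi> (EFloat f) (TBase TFloat)"
| ty_bool: "has_ty \<Gamma> \<pi> (EBool b) (TBase TBool)"
| ty_pid: "pless \<pi> (Grid, 1) \<Longrightarrow> has_ty \<Gamma> \<pi> EPid (TBase TInt)"
| ty_idx_gl: "\<lbrakk> has_ty \<Gamma> \<pi>'' e1 (TArr \<beta> l); has_ty \<Gamma> \<pi> e2 (TBase TInt);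
               l \<in> {Global, Local}; pleq \<pi> \<pi>'' \<rbrakk>
             \<Longrightarrow> has_ty \<Gamma> \<pi> (EIdx e1 e2) (TBase \<beta>)"
| ty_idx_sh: "\<lbrakk> has_ty \<Gamma> \<pi>'' e1 (TArr \<beta> Shared); has_ty \<Gamma> \<pi> e2 (TBase TInt);
               pleq \<pi> (Block, 1); pleq \<pi> \<pi>'' \<rbrakk>
             \<Longrightarrow> has_ty \<Gamma> \<pi> (EIdx e1 e2) (TBase \<beta>)"
| ty_bop: "\<lbrakk> has_ty \<Gamma> \<pi> e1 (TBase TInt); has_ty \<Gamma> \<pi> e2 (TBase TInt) \<rbrakk>
             \<Longrightarrow> has_ty \<Gamma> \<pi> (EBop f e1 e2) (TBase TInt)"
| ty_cmp: "\<lbrakk> has_ty \<Gamma> \<pi> e1 (TBase TInt); has_ty \<Gamma> \<pi> e2 (TBase TInt) \<rbrakk>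
             \<Longrightarrow> has_ty \<Gamma> \<pi> (ECmp c e1 e2) (TBase TBool)"

section \<open>Evaluation (parameterized by T threads per block, B blocks per grid)\<close>

inductive eval :: "nat \<Rightarrow> nat \<Rightarrow> 'c mem \<Rightarrow> 'c mem \<Rightarrow> 'c mem \<Rightarrow> persp \<Rightarrow> persp \<Rightarrow> exp \<Rightarrow> 'c val \<Rightarrow> bool"
  for T B \<eta> \<sigma> \<Sigma> where
  ev_pid: "\<lbrakk> pless \<pi> (Grid, 1); pleq \<pi>' \<pi> \<rbrakk>
           \<Longrightarrow> eval T B \<eta> \<sigma> \<Sigma> \<pi> \<pi>' EPid (VInt (int (pdiv T B \<pi> \<pi>') - 1))"
| ev_var: "get \<eta> \<sigma> \<Sigma> x = Some v \<Longrightarrow> eval T B \<eta> \<sigma> \<Sigma> \<pi> \<pi>' (EVar x) v"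
| ev_idx: "\<lbrakk> eval T B \<eta> \<sigma> \<Sigma> \<pi> \<pi>' e1 (VArr l n); eval T B \<eta> \<sigma> \<Sigma> \<pi> \<pi>' e2 (VInt i);
            i < int n; pleq \<pi>' \<pi>; get \<eta> \<sigma> \<Sigma> (l + i) = Some v \<rbrakk>
           \<Longrightarrow> eval T B \<eta> \<sigma> \<Sigma> \<pi> \<pi>' (EIdx e1 e2) v"
| ev_int: "eval T B \<eta> \<sigma> \<Sigma> \<pi> \<pi>' (EInt n) (VInt n)"
| ev_float: "eval T B \<eta> \<sigma> \<Sigma> \<pi> \<pi>' (EFloat f) (VFloat f)"
| ev_bool: "eval T B \<eta> \<sigma> \<Sigma> \<pi> \<pi>' (EBool b) (VBool b)"
| ev_bop: "\<lbrakk> eval T B \<eta> \<sigma> \<Sigma> \<pi> \<pi>' e1 (VInt a); eval T B \<eta> \<sigma> \<Sigma> \<pi> \<pi>' e2 (VInt b) \<rbrakk>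
           \<Longrightarrow> eval T B \<eta> \<sigma> \<Sigma> \<pi> \<pi>' (EBop f e1 e2) (VInt (f a b))"
| ev_cmp: "\<lbrakk> eval T B \<eta> \<sigma> \<Sigma> \<pi> \<pi>' e1 (VInt a); eval T B \<eta> \<sigma> \<Sigma> \<pi> \<pi>' e2 (VInt b) \<rbrakk>
           \<Longrightarrow> eval T B \<eta> \<sigma> \<Sigma> \<pi> \<pi>' (ECmp c e1 e2) (VBool (c a b))"

fun subexps :: "exp \<Rightarrow> exp set" where
  "subexps (EIdx e1 e2) = insert (EIdx e1 e2) (subexps e1 \<union> subexps e2)"
| "subexps (EBop f e1 e2) = insert (EBop f e1 e2) (subexps e1 \<union> subexps e2)"
| "subexps (ECmp c e1 e2) = insert (ECmp c e1 e2) (subexps e1 \<union> subexps e2)"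
| "subexps e = {e}"

text \<open>Every subexpression is evaluated at the same perspectives, so this quantifies over all
  array accesses occurring during evaluation.\<close>
definition in_bounds :: "nat \<Rightarrow> nat \<Rightarrow> 'c mem \<Rightarrow> 'c mem \<Rightarrow> 'c mem \<Rightarrow> persp \<Rightarrow> persp \<Rightarrow> exp \<Rightarrow> bool" where
  "in_bounds T B \<eta> \<sigma> \<Sigma> \<pi> \<pi>' e =
     (\<forall>e1 e2 l n i. EIdx e1 e2 \<in> subexps e \<longrightarrow>
        eval T B \<eta> \<sigma> \<Sigma> \<pi> \<pi>' e1 (VArr l n) \<longrightarrow>
        eval T B \<eta> \<sigma> \<Sigma> \<pi> \<pi>' e2 (VInt i) \<longrightarrow> 0 \<le> i \<and> i < int n)"

end

theory Submission
  imports Defs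
begin

text \<open>A variable is typed by the environment typing, which puts
  it into exactly one of the three disjoint memories, so the lookup through all three memories
  finds the typed value. An array access reads a cell of an array value whose type, by induction,
  guarantees a value of the element type at every in-bounds index; the in-bounds hypothesis
  supplies the missing lower bound on the index.\<close>

lemma env_ty_get_vty:
  assumes mem: "memories_ok \<eta> \<sigma> \<Sigma>" and env: "env_ty ctyp \<Gamma> \<eta> \<sigma> \<Sigma>"
    and bound: "(x, \<rho>, \<tau>) \<in> set \<Gamma>" and lookup: "get \<eta> \<sigma> \<Sigma> x = Some v"
  shows "vty ctyp \<eta> \<sigma> \<Sigma> v \<tau>"
proof -
  have disj: "\<eta> x = None \<or> \<sigma> x = None" "\<eta> x = None \<or> \<Sigma> x = None"
    "\<sigma> x = None \<or> \<Sigma> x = None"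
    using mem unfolding memories_ok_def by auto
  have stored: "case \<tau> of TArr _ Shared \<Rightarrow> \<exists>w. \<sigma> x = Some (\<rho>, w) \<and> vty ctyp \<eta> \<sigma> \<Sigma> w \<tau>
    | TArr _ Global \<Rightarrow> \<exists>w. \<Sigma> x = Some (\<rho>, w) \<and> vty ctyp \<eta> \<sigma> \<Sigma> w \<tau>
    | TFun _ _ _ \<Rightarrow> \<exists>w. \<Sigma> x = Some (\<rho>, w) \<and> vty ctyp \<eta> \<sigma> \<Sigma> w \<tau>
    | TAsync _ \<Rightarrow> False
    | _ \<Rightarrow> \<exists>w. \<eta> x = Some (\<rho>, w) \<and> vty ctyp \<eta> \<sigma> \<Sigma> w \<tau>"
    using env bound unfolding env_ty_def by (fastforce split: ty.split memkind.split)
  show ?thesis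
  proof (cases \<tau>)
    case (TArr \<beta> k)
    with stored lookup disj show ?thesis
      by (cases k) (auto simp: get_def split: option.splits)
  qed (use stored lookup disj in \<open>auto simp: get_def split: option.splits\<close>)
qed

lemma vty_VArr_get:
  assumes "vty ctyp \<eta> \<sigma> \<Sigma> (VArr a n) (TArr \<beta> l)" and "0 \<le> i" and "i < int n"
    and "get \<eta> \<sigma> \<Sigma> (a + i) = Some v"
  shows "vty ctyp \<eta> \<sigma> \<Sigma> v (TBase \<beta>)"
proof -
  have "nat i < n" and "a + int (nat i) = a + i" using assms(2,3) by simp_all
  then show ?thesis using assms(1,4) by fastforce
qed

lemma subexps_refl: "e \<in> subexps e"
  by (cases e) auto

lemma in_bounds_mono:
  "\<lbrakk>in_bounds T B \<eta> \<sigma> \<Sigma> \<pi> \<pi>' e; subexps e' \<subseteq> subexps e\<rbrakk>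
   \<Longrightarrow> in_bounds T B \<eta> \<sigma> \<Sigma> \<pi> \<pi>' e'"
  unfolding in_bounds_def by blast

lemma eval_EIdx_vty:
  assumes ev: "eval T B \<eta> \<sigma> \<Sigma> \<pi> \<pi>' (EIdx e1 e2) v"
    and ib: "in_bounds T B \<eta> \<sigma> \<Sigma> \<pi> \<pi>' (EIdx e1 e2)"
    and arr: "\<And>w. eval T B \<eta> \<sigma> \<Sigma> \<pi> \<pi>' e1 w \<Longrightarrow> vty ctyp \<eta> \<sigma> \<Sigma> w (TArr \<beta> l)"
  shows "vty ctyp \<eta> \<sigma> \<Sigma> v (TBase \<beta>)"
proof -
  from ev obtain a n i where
    ev1: "eval T B \<eta> \<sigma> \<Sigma> \<pi> \<pi>' e1 (VArr a n)" and ev2: "eval T B \<eta> \<sigma> \<Sigma> \<pi> \<pi>' e2 (VInt i)"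
    and "i < int n" and "get \<eta> \<sigma> \<Sigma> (a + i) = Some v"
    by (cases rule: eval.cases) auto
  moreover have "0 \<le> i"
    using ib ev1 ev2 subexps_refl unfolding in_bounds_def by blast
  ultimately show ?thesis using vty_VArr_get arr by blast
qed

lemma has_ty_eval_vty:
  assumes "has_ty \<Gamma> \<rho> e \<tau>" and "memories_ok \<eta> \<sigma> \<Sigma>" and "env_ty ctyp \<Gamma> \<eta> \<sigma> \<Sigma>"
    and "in_bounds T B \<eta> \<sigma> \<Sigma> \<pi> \<pi>' e" and "eval T B \<eta> \<sigma> \<Sigma> \<pi> \<pi>' e v"
  shows "vty ctyp \<eta> \<sigma> \<Sigma> v \<tau>"
  using assms
proof (induction arbitrary: v rule: has_ty.induct)
  case (ty_var x \<rho> \<tau> \<Gamma>)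
  then show ?case by (auto elim: eval.cases intro: env_ty_get_vty)
next
  case (ty_idx_gl \<Gamma> \<rho>'' e1 \<beta> l \<rho> e2)
  have "in_bounds T B \<eta> \<sigma> \<Sigma> \<pi> \<pi>' e1"
    using ty_idx_gl.prems(3) by (rule in_bounds_mono) auto
  then have "\<And>w. eval T B \<eta> \<sigma> \<Sigma> \<pi> \<pi>' e1 w \<Longrightarrow> vty ctyp \<eta> \<sigma> \<Sigma> w (TArr \<beta> l)"
    using ty_idx_gl.IH(1) ty_idx_gl.prems(1,2) by blast
  with ty_idx_gl.prems(4,3) show ?case by (rule eval_EIdx_vty)
next
  case (ty_idx_sh \<Gamma> \<rho>'' e1 \<beta> \<rho> e2)
  have "in_bounds T B \<eta> \<sigma> \<Sigma> \<pi> \<pi>' e1"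
    using ty_idx_sh.prems(3) by (rule in_bounds_mono) auto
  then have "\<And>w. eval T B \<eta> \<sigma> \<Sigma> \<pi> \<pi>' e1 w \<Longrightarrow> vty ctyp \<eta> \<sigma> \<Sigma> w (TArr \<beta> Shared)"
    using ty_idx_sh.IH(1) ty_idx_sh.prems(1,2) by blast
  with ty_idx_sh.prems(4,3) show ?case by (rule eval_EIdx_vty)
qed (auto elim: eval.cases)

theorem lemmaA6:
  fixes T B :: nat
    and ctyp :: "'c \<Rightarrow> ty \<Rightarrow> bool"
    and \<Gamma> :: ctx and e :: exp and \<tau> :: ty and \<pi> \<pi>' :: persp and p :: nat
    and \<eta> \<sigma> \<Sigma> :: "'c mem" and v :: "'c val"
  assumes "0 < T" and "0 < B"
    and "memories_ok \<eta> \<sigma> \<Sigma>"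
    and "in_bounds T B \<eta> \<sigma> \<Sigma> \<pi> \<pi>' e"
    and "has_ty \<Gamma> \<pi> e \<tau>"
    and "env_ty ctyp \<Gamma> \<eta> \<sigma> \<Sigma>"
    and "pvdash \<pi> p"
    and "eval T B \<eta> \<sigma> \<Sigma> \<pi> \<pi>' e v"
  shows "vty ctyp \<eta> \<sigma> \<Sigma> v \<tau>"
  using has_ty_eval_vty[OF assms(5,3,6,4,8)] .

end
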